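(* Let $n\geq1$ be an integer, $p>1$, $q=pe^{2\pi i/n}$, and let $A=\{a_1,\dots,a_m\}\subset\mathbb R$ be a finite nonempty set. Let $\Lambda_{n,p,A}=\{\sum_{j=1}^\infty x_jq^{-j}\mid x_j\in A\}$, let $f_i(x)=\frac1q(x+a_i)$ for $i=1,\dots,m$, and for $X\subset\mathbb C$ let $\mathcal F_{n,p,A}(X)=\bigcup_{i=1}^m f_i(X)$. Then $\Lambda_{n,p,A}$ is convex if and only if $\mathcal F_{n,p,A}(\mathrm{conv}(\Lambda_{n,p,A}))$ is convex.
   Context: $\mathrm{conv}$ denotes convex hull in $\mathbb C\cong\mathbb R^2$. *)

theory Defs
  imports "HOL-Analysis.Analysis"
begin

definition qbase :: "nat \<Rightarrow> real \<Rightarrow> complex" where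
  "qbase n p = complex_of_real p * cis (2 * pi / real n)"

text \<open>Lambda_{n,p,A}: all sums of x_j q^{-j}, j \<ge> 1, with digits x_j in A.
  Index shift: x k corresponds to x_{k+1}.\<close>
definition Lambda :: "nat \<Rightarrow> real \<Rightarrow> real set \<Rightarrow> complex set" where
  "Lambda n p A = {(\<Sum>k. complex_of_real (x k) / qbase n p ^ (Suc k)) | x. \<forall>k. x k \<in> A}"

definition fmap :: "nat \<Rightarrow> real \<Rightarrow> real \<Rightarrow> complex \<Rightarrow> complex" where
  "fmap n p a z = (z + complex_of_real a) / qbase n p"

definition Fop :: "nat \<Rightarrow> real \<Rightarrow> real set \<Rightarrow> complex set \<Rightarrow> complex set" where
  "Fop n p A X = (\<Union>a\<in>A. fmap n p a ` X)"

end

theory Submission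
  imports Defs
begin

text \<open>
  \<open>\<Lambda>\<close> is the attractor of the contractions \<open>f\<^sub>a\<close> (ratio \<open>1/p\<close>): \<open>\<F>(\<Lambda>) = \<Lambda>\<close>. So if \<open>\<Lambda>\<close> is
  convex, \<open>\<F>(conv \<Lambda>) = \<F>(\<Lambda>) = \<Lambda>\<close> is convex. Conversely, if \<open>\<F>(conv \<Lambda>)\<close> is convex, it
  contains \<open>\<F>(\<Lambda>) = \<Lambda>\<close> and hence \<open>conv \<Lambda>\<close>. Thus \<open>K = conv \<Lambda>\<close> is a bounded set with
  \<open>K \<subseteq> \<F>(K)\<close>. Every point of such a set has an infinite backward orbit in \<open>K\<close>, and the
  digits read off along that orbit expand the point in base \<open>q\<close>. Hence \<open>K \<subseteq> \<Lambda>\<close>, i.e.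
  \<open>\<Lambda> = conv \<Lambda>\<close>.
\<close>

definition digit_series :: "complex \<Rightarrow> (nat \<Rightarrow> complex) \<Rightarrow> complex" where
  "digit_series q d = (\<Sum>k. d k / q ^ Suc k)"

lemma norm_qbase: "norm (qbase n p) = \<bar>p\<bar>"
  by (simp add: qbase_def norm_mult)

lemma Lambda_eq_digit_series:
  "Lambda n p A = {digit_series (qbase n p) (\<lambda>k. complex_of_real (x k)) | x. \<forall>k. x k \<in> A}"
  by (simp add: Lambda_def digit_series_def)

lemma
  assumes q: "norm q > 1" and d: "\<And>k. norm (d k) \<le> M"
  shows summable_norm_digit_series: "summable (\<lambda>k. norm (d k / q ^ Suc k))"
    and norm_digit_series_le: "norm (digit_series q d) \<le> M / (norm q - 1)"
proof -
  let ?r = "norm q"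
  have r: "?r > 0" using q by linarith
  have geom: "(\<lambda>k. M / ?r * (1 / ?r) ^ k) sums (M / ?r * (1 / (1 - 1 / ?r)))"
    using q by (intro sums_mult geometric_sums) (auto simp: divide_less_eq_1)
  have le: "norm (d k / q ^ Suc k) \<le> M / ?r * (1 / ?r) ^ k" for k
  proof -
    have "norm (d k / q ^ Suc k) = norm (d k) / ?r ^ Suc k"
      by (simp add: norm_divide norm_power del: power_Suc)
    also have "\<dots> \<le> M / ?r ^ Suc k"
      using q d by (intro divide_right_mono) auto
    finally show ?thesis by (simp add: power_divide)
  qed
  show s: "summable (\<lambda>k. norm (d k / q ^ Suc k))"
    by (rule summable_comparison_test[OF _ sums_summable[OF geom]]) (use le in auto)
  have "norm (digit_series q d) \<le> (\<Sum>k. norm (d k / q ^ Suc k))"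
    unfolding digit_series_def by (rule summable_norm[OF s])
  also have "\<dots> \<le> M / ?r * (1 / (1 - 1 / ?r))"
    using suminf_le[OF le s sums_summable[OF geom]] sums_unique[OF geom] by simp
  also have "\<dots> = M / (?r - 1)"
    using r by (simp add: field_simps)
  finally show "norm (digit_series q d) \<le> M / (norm q - 1)" .
qed

lemma summable_digit_series:
  fixes q :: complex
  assumes "norm q > 1" "\<And>k. norm (d k) \<le> M"
  shows "summable (\<lambda>k. d k / q ^ Suc k)"
  using summable_norm_digit_series[OF assms] by (rule summable_norm_cancel)

lemma digit_series_case_nat:
  fixes q :: complex
  assumes "norm q > 1" "\<And>k. norm (d k) \<le> M"
  shows "digit_series q (case_nat a d) = (a + digit_series q d) / q"
proof -
  have "norm (case_nat a d k) \<le> max (norm a) M" for k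
    using assms(2) by (cases k) (auto simp: le_max_iff_disj)
  then have "summable (\<lambda>k. case_nat a d k / q ^ Suc k)"
    by (rule summable_digit_series[OF assms(1)])
  then have "digit_series q (case_nat a d) = a / q + (\<Sum>k. d k / q ^ Suc k / q)"
    unfolding digit_series_def
    by (auto dest: suminf_split_head simp: mult.commute divide_divide_eq_left)
  also have "\<dots> = (a + digit_series q d) / q"
    using suminf_divide[OF summable_digit_series[of q d M, OF assms]]
    by (simp add: digit_series_def add_divide_distrib)
  finally show ?thesis .
qed

lemma digit_series_of_bounded_orbit:
  assumes q: "norm q > 1" and d: "\<And>k. norm (d k) \<le> M" and z: "\<And>k. norm (z k) \<le> B"
    and orbit: "\<And>k. z k = (z (Suc k) + d k) / q"
  shows "z 0 = digit_series q d"
proof -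
  have q0: "q \<noteq> 0" using q by auto
  have partial: "z 0 = (\<Sum>k<N. d k / q ^ Suc k) + z N / q ^ N" for N
  proof (induction N)
    case (Suc N)
    have "z N / q ^ N = d N / q ^ Suc N + z (Suc N) / q ^ Suc N"
      using q0 by (subst orbit) (simp add: field_simps)
    with Suc show ?case by simp
  qed simp
  have "(\<lambda>N. z N / q ^ N) \<longlonglongrightarrow> 0"
  proof (rule Lim_null_comparison)
    show "\<forall>\<^sub>F N in sequentially. norm (z N / q ^ N) \<le> B * (1 / norm q) ^ N"
      using z q by (intro always_eventually allI)
        (simp add: norm_divide norm_power power_divide divide_right_mono)
    show "(\<lambda>N. B * (1 / norm q) ^ N) \<longlonglongrightarrow> 0"
      using q by (intro tendsto_mult_right_zero LIMSEQ_power_zero) (auto simp: divide_less_eq_1)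
  qed
  then have "(\<lambda>N. (\<Sum>k<N. d k / q ^ Suc k) + z N / q ^ N) \<longlonglongrightarrow> digit_series q d + 0"
    unfolding digit_series_def
    by (intro tendsto_add summable_LIMSEQ summable_digit_series[of q d M, OF q d])
  also have "(\<lambda>N. (\<Sum>k<N. d k / q ^ Suc k) + z N / q ^ N) = (\<lambda>N. z 0)"
    using partial by (intro ext) (rule sym)
  finally show ?thesis
    by (simp add: LIMSEQ_const_iff)
qed

lemma bounded_digits:
  assumes "bounded A" "\<forall>k. x k \<in> A"
  obtains M where "\<And>k. norm (complex_of_real (x k)) \<le> M"
  using assms by (metis bounded_iff norm_of_real real_norm_def)

lemma bounded_Lambda:
  assumes "p > 1" "bounded A"
  shows "bounded (Lambda n p A)"
proof -
  obtain M where M: "\<And>a. a \<in> A \<Longrightarrow> \<bar>a\<bar> \<le> M"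
    using assms(2) by (metis bounded_iff real_norm_def)
  have "norm z \<le> M / (p - 1)" if "z \<in> Lambda n p A" for z
  proof -
    obtain x where z: "z = digit_series (qbase n p) (\<lambda>k. complex_of_real (x k))"
      and x: "\<forall>k. x k \<in> A"
      using \<open>z \<in> Lambda n p A\<close> by (auto simp: Lambda_eq_digit_series)
    have "norm z \<le> M / (norm (qbase n p) - 1)"
      unfolding z using assms(1) x M by (intro norm_digit_series_le) (auto simp: norm_qbase)
    then show ?thesis using assms(1) by (simp add: norm_qbase)
  qed
  then show ?thesis by (rule boundedI)
qed

lemma Fop_Lambda:
  assumes "p > 1" "bounded A"
  shows "Fop n p A (Lambda n p A) = Lambda n p A"
proof -
  let ?q = "qbase n p"
  have q: "norm ?q > 1" using assms(1) by (simp add: norm_qbase)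
  have cons: "fmap n p a (digit_series ?q (\<lambda>k. complex_of_real (x k)))
      = digit_series ?q (\<lambda>k. complex_of_real (case_nat a x k))" if x: "\<forall>k. x k \<in> A" for a and x :: "nat \<Rightarrow> real"
  proof -
    obtain M where M: "\<And>k. norm (complex_of_real (x k)) \<le> M"
      using bounded_digits[OF assms(2) x] by blast
    have "(\<lambda>k. complex_of_real (case_nat a x k)) = case_nat (complex_of_real a) (\<lambda>k. complex_of_real (x k))"
      by (rule ext) (simp split: nat.split)
    then show ?thesis
      using digit_series_case_nat[of ?q "\<lambda>k. complex_of_real (x k)" M, OF q M]
      by (simp add: fmap_def add.commute)
  qed
  show ?thesis
  proof
    show "Fop n p A (Lambda n p A) \<subseteq> Lambda n p A"
    proof (clarsimp simp: Fop_def Lambda_eq_digit_series)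
      fix a and x :: "nat \<Rightarrow> real" assume "a \<in> A" "\<forall>k. x k \<in> A"
      then show "\<exists>y. fmap n p a (digit_series ?q (\<lambda>k. complex_of_real (x k)))
          = digit_series ?q (\<lambda>k. complex_of_real (y k)) \<and> (\<forall>k. y k \<in> A)"
        by (intro exI[of _ "case_nat a x"]) (simp add: cons split: nat.split)
    qed
    show "Lambda n p A \<subseteq> Fop n p A (Lambda n p A)"
    proof (clarsimp simp: Fop_def Lambda_eq_digit_series)
      fix x :: "nat \<Rightarrow> real" assume x: "\<forall>k. x k \<in> A"
      have "case_nat (x 0) (x \<circ> Suc) = x"
        by (rule ext) (simp split: nat.split)
      then have "digit_series ?q (\<lambda>k. complex_of_real (x k))
          = fmap n p (x 0) (digit_series ?q (\<lambda>k. complex_of_real ((x \<circ> Suc) k)))"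
        using cons[of "x \<circ> Suc" "x 0"] x by simp
      moreover have "digit_series ?q (\<lambda>k. complex_of_real ((x \<circ> Suc) k))
          \<in> {digit_series ?q (\<lambda>k. complex_of_real (y k)) | y. \<forall>k. y k \<in> A}"
        using x by auto
      ultimately show "\<exists>a\<in>A. digit_series ?q (\<lambda>k. complex_of_real (x k))
          \<in> fmap n p a ` {digit_series ?q (\<lambda>k. complex_of_real (y k)) | y. \<forall>k. y k \<in> A}"
        using x by (blast intro: image_eqI)
    qed
  qed
qed

lemma subset_Lambda_if_subset_Fop:
  assumes "p > 1" "bounded A" "bounded K" and K: "K \<subseteq> Fop n p A K"
  shows "K \<subseteq> Lambda n p A"
proof
  fix z assume "z \<in> K"
  have "\<forall>w\<in>K. \<exists>a\<in>A. \<exists>v\<in>K. w = fmap n p a v"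
    using K unfolding Fop_def by blast
  then obtain digit prev where step: "\<And>w. w \<in> K \<Longrightarrow>
      digit w \<in> A \<and> prev w \<in> K \<and> w = fmap n p (digit w) (prev w)"
    by metis
  define orbit where "orbit k = (prev ^^ k) z" for k
  have orbit_K: "orbit k \<in> K" for k
    by (induction k) (use \<open>z \<in> K\<close> step in \<open>auto simp: orbit_def\<close>)
  define x where "x k = digit (orbit k)" for k
  have x: "\<forall>k. x k \<in> A" using step orbit_K by (simp add: x_def)
  obtain M where M: "\<And>k. norm (complex_of_real (x k)) \<le> M"
    using bounded_digits[OF assms(2) x] by blast
  obtain B where B: "\<And>k. norm (orbit k) \<le> B"
    using assms(3) orbit_K unfolding bounded_iff by blast
  have "orbit 0 = digit_series (qbase n p) (\<lambda>k. complex_of_real (x k))"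
  proof (rule digit_series_of_bounded_orbit[OF _ M B])
    show "norm (qbase n p) > 1" using assms(1) by (simp add: norm_qbase)
    show "orbit k = (orbit (Suc k) + complex_of_real (x k)) / qbase n p" for k
      using step[OF orbit_K[of k]] by (simp add: orbit_def x_def fmap_def)
  qed
  then show "z \<in> Lambda n p A"
    using x by (auto simp: Lambda_eq_digit_series orbit_def)
qed

theorem lemma4p5:
  fixes n :: nat and p :: real and A :: "real set"
  assumes "n \<ge> 1" and "p > 1" and "finite A" and "A \<noteq> {}"
  shows "convex (Lambda n p A) \<longleftrightarrow> convex (Fop n p A (convex hull (Lambda n p A)))"
proof
  let ?L = "Lambda n p A"
  have bA: "bounded A" using assms(3) by (rule finite_imp_bounded)
  have attractor: "Fop n p A ?L = ?L" using Fop_Lambda[OF assms(2) bA] .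
  show "convex (Fop n p A (convex hull ?L))" if "convex ?L"
    using that attractor by (simp add: convex_hull_eq[THEN iffD2])
  assume convex_F: "convex (Fop n p A (convex hull ?L))"
  have "?L \<subseteq> Fop n p A (convex hull ?L)"
    using attractor hull_subset[of ?L convex] unfolding Fop_def by blast
  then have "convex hull ?L \<subseteq> Fop n p A (convex hull ?L)"
    using convex_F by (rule hull_minimal)
  moreover have "bounded (convex hull ?L)"
    using bounded_Lambda[OF assms(2) bA] by (rule bounded_convex_hull)
  ultimately have "convex hull ?L \<subseteq> ?L"
    using subset_Lambda_if_subset_Fop[OF assms(2) bA] by blast
  then show "convex ?L"
    using hull_subset[of ?L convex] convex_convex_hull[of ?L] by (metis subset_antisym)
qed

end
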